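(* Let $A$ be a finite group with a normal subgroup $G$ such that $A/G$ is cyclic. Let $X,Y\in A$ have the same image in $A/G$. Suppose that $X^2$ is conjugate to $Y^2$ in $A$ and that $X^r$ is conjugate to $Y^r$ in $A$ for some odd integer $r>1$, but that $X$ is not conjugate to $Y$ in $A$. Then $4$ divides $|G|$. *)

theory Defs
  imports "HOL-Algebra.Algebra"
begin

definition conjugate_in :: "('a, 'b) monoid_scheme \<Rightarrow> 'a \<Rightarrow> 'a \<Rightarrow> bool" where
  "conjugate_in A x y \<longleftrightarrow>
     (\<exists>g \<in> carrier A. y = g \<otimes>\<^bsub>A\<^esub> x \<otimes>\<^bsub>A\<^esub> inv\<^bsub>A\<^esub> g)"

end

theory Submission
  imports Defs "HOL-Library.Z2"
begin

text \<open>
  Suppose that \<open>4\<close> does not divide \<open>|G|\<close>. Then \<open>A\<close> has a normal subgroup \<open>K\<close> of odd order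
  containing all commutators \<open>[a, g]\<close> with \<open>a \<in> A\<close>, \<open>g \<in> G\<close>: take \<open>K = G\<close> if \<open>|G|\<close> is odd,
  and otherwise the kernel of the sign of the regular representation of \<open>G\<close>, which has index 2
  because an involution of \<open>G\<close> acts on \<open>G\<close> as a product of \<open>|G|/2\<close> transpositions. Since \<open>A/G\<close>
  is cyclic and \<open>G/K\<close> is central in \<open>A/K\<close>, the quotient \<open>A/K\<close> is abelian. Conjugate elements
  therefore agree modulo \<open>K\<close>, so \<open>x\<^sup>2 \<sim> y\<^sup>2\<close> and \<open>x\<^sup>r \<sim> y\<^sup>r\<close> with \<open>r\<close> odd give \<open>xK = yK\<close>.
  After conjugating \<open>x\<close> we may assume \<open>x\<^sup>2 = y\<^sup>2\<close>. Write \<open>x = tu\<close> and \<open>y = su\<close>, where \<open>u\<close> is a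
  common power of \<open>x\<^sup>2 = y\<^sup>2\<close> and \<open>t\<close>, \<open>s\<close> have 2-power order. Then \<open>k \<mapsto> t k s\<^sup>-\<^sup>1\<close> is a
  permutation of 2-power order of the odd-order group \<open>C\<^sub>K(u)\<close>, so it has a fixed point \<open>k\<close>,
  and \<open>y = k\<^sup>-\<^sup>1 x k\<close>.
\<close>

section \<open>Involutions and maps of 2-power order\<close>

lemma even_card_if_fixpoint_free_involution:
  assumes "\<And>x. x \<in> S \<Longrightarrow> f x \<in> S" "\<And>x. x \<in> S \<Longrightarrow> f (f x) = x"
    and "\<And>x. x \<in> S \<Longrightarrow> f x \<noteq> x"
  shows "even (card S)"
proof -
  have "(\<Sum>x\<in>S. 1 :: bit) = 0"
    by (rule sum_involution_eq_0[where h = f]) (use assms in auto)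
  then have "of_nat (card S) = (0 :: bit)" by simp
  then show ?thesis by (metis even_of_nat_iff even_zero)
qed

lemma card_fixpoints_parity_if_funpow_2_power:
  assumes "finite S" "\<And>x. x \<in> S \<Longrightarrow> f x \<in> S" "\<And>x. x \<in> S \<Longrightarrow> (f ^^ 2 ^ n) x = x"
  shows "even (card S + card {x\<in>S. f x = x})"
  using assms(2,3)
proof (induction n arbitrary: f)
  case 0
  then have "{x\<in>S. f x = x} = S" by auto
  then show ?case by simp
next
  case (Suc n)
  define T where "T = {x\<in>S. f (f x) = x}"
  have iter: "(f \<circ> f) ^^ 2 ^ n = f ^^ 2 ^ Suc n"
  proof -
    have "f \<circ> f = f ^^ 2" by (simp add: numeral_2_eq_2)
    then show ?thesis by (simp add: funpow_mult)
  qed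
  have "even (card S + card {x\<in>S. (f \<circ> f) x = x})"
  proof (rule Suc.IH)
    fix x assume "x \<in> S"
    then show "(f \<circ> f) x \<in> S" using Suc.prems(1) by simp
    show "((f \<circ> f) ^^ 2 ^ n) x = x" unfolding iter by (rule Suc.prems(2)[OF \<open>x \<in> S\<close>])
  qed
  then have "even (card S + card T)" by (simp add: T_def)
  moreover have "card T = card {x\<in>S. f x = x} + card {x\<in>T. f x \<noteq> x}"
  proof -
    have "T = {x\<in>S. f x = x} \<union> {x\<in>T. f x \<noteq> x}" by (auto simp: T_def)
    also have "card \<dots> = card {x\<in>S. f x = x} + card {x\<in>T. f x \<noteq> x}"
      by (rule card_Un_disjoint) (use assms(1) in \<open>auto simp: T_def\<close>)
    finally show ?thesis .
  qed
  moreover have "even (card {x\<in>T. f x \<noteq> x})"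
    by (rule even_card_if_fixpoint_free_involution[where f = f])
       (use Suc.prems in \<open>auto simp: T_def\<close>)
  ultimately show ?case by presburger
qed

lemma exists_fixpoint_if_funpow_2_power:
  assumes "finite S" "odd (card S)"
    and "\<And>x. x \<in> S \<Longrightarrow> f x \<in> S" "\<And>x. x \<in> S \<Longrightarrow> (f ^^ 2 ^ n) x = x"
  shows "\<exists>x\<in>S. f x = x"
proof -
  have "odd (card {x\<in>S. f x = x})"
    using card_fixpoints_parity_if_funpow_2_power[of S f n] assms by auto
  then show ?thesis by (metis (mono_tags, lifting) card.empty empty_Collect_eq even_zero)
qed

lemma sign_fixpoint_free_involution:
  assumes "finite S" "p permutes S"
    and "\<And>x. x \<in> S \<Longrightarrow> p (p x) = x" "\<And>x. x \<in> S \<Longrightarrow> p x \<noteq> x"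
  shows "sign p = (-1::int) ^ (card S div 2)"
  using assms
proof (induction "card S" arbitrary: S p rule: less_induct)
  case less
  show ?case
  proof (cases "S = {}")
    case True
    with less.prems(2) show ?thesis by simp
  next
    case False
    then obtain x where x: "x \<in> S" by blast
    define y where "y = p x"
    have y: "y \<in> S" "y \<noteq> x" "p y = x"
      using less.prems x permutes_in_image[OF less.prems(2)] by (auto simp: y_def)
    define S' where "S' = S - {x, y}"
    define q where "q = transpose x y \<circ> p"
    have q_outside: "q z = p z" if "z \<in> S'" for z
    proof -
      have "p z \<noteq> x" "p z \<noteq> y"
        using that less.prems(3)[of z] less.prems(3)[OF x] by (auto simp: S'_def y_def)
      then show ?thesis by (simp add: q_def)
    qed
    have "q permutes S'"
    proof (rule permutes_superset)
      show "q permutes S"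
        unfolding q_def by (rule permutes_compose[OF less.prems(2) permutes_swap_id[OF x y(1)]])
      show "q z = z" if "z \<in> S - S'" for z
        using that y by (auto simp: S'_def q_def y_def)
    qed
    have "card {x, y} \<le> card S"
      using less.prems(1) x y(1) by (intro card_mono) auto
    then have card_S: "card S = card S' + 2"
      using less.prems(1) x y(1,2) by (simp add: S'_def card_Diff_subset)
    have "sign q = (-1::int) ^ (card S' div 2)"
    proof (rule less.hyps)
      show "card S' < card S" "finite S'" "q permutes S'"
        using card_S less.prems(1) \<open>q permutes S'\<close> by (simp_all add: S'_def)
      fix z assume z: "z \<in> S'"
      then have "p z \<in> S'"
        using less.prems(3)[of z] less.prems(3)[OF x] permutes_in_image[OF less.prems(2)]
        by (auto simp: S'_def y_def)
      with z show "q (q z) = z" "q z \<noteq> z"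
        using less.prems(3,4) by (simp_all add: q_outside S'_def)
    qed
    moreover have "p = transpose x y \<circ> q"
      by (simp add: q_def comp_assoc[symmetric])
    then have "sign p = - sign q"
      using sign_compose[OF permutation_swap_id permutes_imp_permutation[OF _ \<open>q permutes S'\<close>]]
        less.prems(1) y(2) by (simp add: sign_swap_id S'_def)
    ultimately show ?thesis using card_S by simp
  qed
qed

section \<open>Powers, centralizers and conjugation\<close>

text \<open>
  The exponent \<open>e\<close> is the idempotent of \<open>\<int>/n\<close> that is \<open>1\<close> modulo the 2-part and \<open>0\<close> modulo the
  odd part of \<open>n\<close>; for \<open>n = |G|\<close>, \<open>z\<^sup>e\<close> is the 2-part of \<open>z\<close> and \<open>z\<^sup>1\<^sup>-\<^sup>e\<close> its odd part, a power of \<open>z\<^sup>2\<close>.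
\<close>
lemma two_part_idempotent_exponent:
  fixes n :: nat
  assumes "n > 0"
  obtains a :: nat and e b :: int where "int n dvd e * 2 ^ a" "int n dvd 2 * b - (1 - e)"
proof -
  obtain a m where n: "n = 2 ^ a * m" "odd m"
    by (rule multiplicity_decompose'[of n 2]) (use assms in auto)
  have "coprime ((2::int) ^ a) (int m)" using n(2) by simp
  then obtain p q :: int where pq: "p * 2 ^ a + q * int m = 1"
    by (metis bezout_int coprime_iff_gcd_eq_1)
  from n(2) have "even (int m + 1)" by simp
  then obtain h :: int where h: "int m + 1 = 2 * h" by (rule evenE)
  show ?thesis
  proof (rule that[where e = "q * int m" and b = "h * p * 2 ^ a"])
    show "int n dvd q * int m * 2 ^ a" using n(1) by simp
    have "1 - q * int m = p * 2 ^ a" using pq by linarith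
    then have "2 * (h * p * 2 ^ a) - (1 - q * int m) = p * (2 ^ a * (2 * h - 1))"
      by (simp add: algebra_simps)
    also have "\<dots> = p * int n" using n(1) h by simp
    finally show "int n dvd 2 * (h * p * 2 ^ a) - (1 - q * int m)" by simp
  qed
qed

definition centralizer :: "('a, 'b) monoid_scheme \<Rightarrow> 'a \<Rightarrow> 'a set"
  where "centralizer G u = {g \<in> carrier G. g \<otimes>\<^bsub>G\<^esub> u = u \<otimes>\<^bsub>G\<^esub> g}"

context group
begin

lemma r_coset_eq_iff:
  assumes "subgroup H G" "x \<in> carrier G" "y \<in> carrier G"
  shows "H #> x = H #> y \<longleftrightarrow> x \<otimes> inv y \<in> H"
proof
  assume "H #> x = H #> y"
  then have "x \<in> H #> y" using rcos_self[OF assms(2,1)] by simp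
  then show "x \<otimes> inv y \<in> H" using subgroup.rcos_module_imp[OF assms(1) is_group assms(3)] by blast
next
  assume "x \<otimes> inv y \<in> H"
  then have "x \<in> H #> y" using subgroup.rcos_module_rev[OF assms(1) is_group assms(3,2)] by blast
  then show "H #> x = H #> y" using repr_independence[OF _ assms(3,1)] by simp
qed

lemma int_pow_eq_if_order_dvd:
  assumes "z \<in> carrier G" "int (order G) dvd i - j"
  shows "z [^] (i::int) = z [^] j"
proof -
  have "int (ord z) dvd i - j"
    using ord_dvd_group_order[OF assms(1)] assms(2) by (meson dvd_trans int_dvd_int_iff)
  then show ?thesis using int_pow_eq[OF assms(1), of j i] by simp
qed

lemma two_part_exponents:
  assumes "finite (carrier G)"
  obtains a :: nat and e b :: int
  where "\<And>z. z \<in> carrier G \<Longrightarrow> (z [^] e) [^] (2 ^ a :: nat) = \<one>"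
    and "\<And>z. z \<in> carrier G \<Longrightarrow> z [^] (1 - e) = (z [^] (2::nat)) [^] b"
proof -
  have "order G > 0" using assms by (simp add: order_gt_0_iff_finite)
  then obtain a e b where E: "int (order G) dvd e * 2 ^ a" "int (order G) dvd 2 * b - (1 - e)"
    by (rule two_part_idempotent_exponent)
  show ?thesis
  proof (rule that)
    fix z assume z: "z \<in> carrier G"
    have "(z [^] e) [^] (2 ^ a :: nat) = z [^] (e * 2 ^ a)"
      using int_pow_pow[OF z, of e "2 ^ a"] int_pow_int[of G "z [^] e" "2 ^ a"] by simp
    also have "\<dots> = z [^] (0::int)" using int_pow_eq_if_order_dvd[OF z, of "e * 2 ^ a" 0] E(1) by simp
    finally show "(z [^] e) [^] (2 ^ a :: nat) = \<one>" by simp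
    have "(z [^] (2::nat)) [^] b = z [^] (2 * b)"
      using int_pow_pow[OF z, of 2 b] by (metis int_pow_int of_nat_numeral)
    also have "\<dots> = z [^] (1 - e)" using int_pow_eq_if_order_dvd[OF z] E(2) by simp
    finally show "z [^] (1 - e) = (z [^] (2::nat)) [^] b" by simp
  qed
qed

lemma subgroup_centralizer:
  assumes "u \<in> carrier G"
  shows "subgroup (centralizer G u) G"
proof (rule subgroupI)
  show "centralizer G u \<subseteq> carrier G" "centralizer G u \<noteq> {}"
    using assms by (auto simp: centralizer_def)
next
  fix g assume "g \<in> centralizer G u"
  then have g: "g \<in> carrier G" and comm: "g \<otimes> u = u \<otimes> g" by (auto simp: centralizer_def)
  have "inv g \<otimes> u = inv g \<otimes> (u \<otimes> g) \<otimes> inv g" using g assms by (simp add: m_assoc)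
  also have "\<dots> = u \<otimes> inv g" using g assms by (simp add: comm[symmetric] m_assoc[symmetric])
  finally show "inv g \<in> centralizer G u" using g by (simp add: centralizer_def)
next
  fix g h assume "g \<in> centralizer G u" "h \<in> centralizer G u"
  then show "g \<otimes> h \<in> centralizer G u"
    using assms by (auto simp: centralizer_def m_assoc) (metis m_assoc)
qed

lemma int_pow_mem_centralizer:
  assumes "x \<in> carrier G"
  shows "x [^] (i::int) \<in> centralizer G (x [^] (j::int))"
  using int_pow_mult[OF assms, of i j] int_pow_mult[OF assms, of j i] assms
  by (simp add: centralizer_def add.commute)

lemma card_subgroup_dvd_card:
  assumes "subgroup H G" "subgroup H' G" "H' \<subseteq> H"
  shows "card H' dvd card H"
proof -
  have "group (G\<lparr>carrier := H\<rparr>)" by (rule subgroup.subgroup_is_group[OF assms(1) is_group])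
  moreover have "subgroup H' (G\<lparr>carrier := H\<rparr>)" by (rule subgroup_incl[OF assms(2,1,3)])
  ultimately have "card (rcosets\<^bsub>G\<lparr>carrier := H\<rparr>\<^esub> H') * card H' = card H"
    using group.lagrange by (fastforce simp: order_def)
  then show ?thesis by (metis dvd_triv_right)
qed

lemma exists_twisted_fixpoint:
  assumes "finite C" "odd (card C)" "C \<subseteq> carrier G" "t \<in> carrier G" "s \<in> carrier G"
    and "t [^] (2 ^ a :: nat) = \<one>" "s [^] (2 ^ a :: nat) = \<one>"
    and "\<And>k. k \<in> C \<Longrightarrow> t \<otimes> k \<otimes> inv s \<in> C"
  shows "\<exists>k\<in>C. t \<otimes> k = k \<otimes> s"
proof -
  define \<sigma> where "\<sigma> k = t \<otimes> k \<otimes> inv s" for k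
  have iter: "(\<sigma> ^^ n) k = t [^] n \<otimes> k \<otimes> inv (s [^] n)" if "k \<in> carrier G" for k n
    using that
  proof (induction n arbitrary: k)
    case 0
    then show ?case by simp
  next
    case (Suc n)
    have "(\<sigma> ^^ Suc n) k = (\<sigma> ^^ n) (\<sigma> k)" by (simp add: funpow_Suc_right del: funpow.simps)
    also have "\<dots> = t [^] n \<otimes> \<sigma> k \<otimes> inv (s [^] n)"
      by (rule Suc.IH) (use Suc.prems assms(4,5) in \<open>simp add: \<sigma>_def\<close>)
    also have "\<dots> = t [^] Suc n \<otimes> k \<otimes> inv (s [^] Suc n)"
      using Suc.prems assms(4,5) by (simp add: \<sigma>_def m_assoc inv_mult_group)
    finally show ?case .
  qed
  have "\<exists>k\<in>C. \<sigma> k = k"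
    by (rule exists_fixpoint_if_funpow_2_power[of C \<sigma> a])
       (use assms iter in \<open>auto simp: \<sigma>_def\<close>)
  then obtain k where "k \<in> C" "t \<otimes> k \<otimes> inv s = k" by (auto simp: \<sigma>_def)
  with assms(3-5) show ?thesis by (metis inv_solve_right' m_closed subsetD)
qed

lemma conjugate_in_trans:
  assumes "conjugate_in G x y" "conjugate_in G y z" "x \<in> carrier G"
  shows "conjugate_in G x z"
proof -
  obtain g h where g: "g \<in> carrier G" "y = g \<otimes> x \<otimes> inv g"
    and h: "h \<in> carrier G" "z = h \<otimes> y \<otimes> inv h"
    using assms(1,2) by (auto simp: conjugate_in_def)
  then have "z = (h \<otimes> g) \<otimes> x \<otimes> inv (h \<otimes> g)" using assms(3) by (simp add: m_assoc inv_mult_group)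
  then show ?thesis using g(1) h(1) by (auto simp: conjugate_in_def)
qed

lemma conjugate_nat_pow:
  assumes "g \<in> carrier G" "z \<in> carrier G"
  shows "(g \<otimes> z \<otimes> inv g) [^] (n::nat) = g \<otimes> z [^] n \<otimes> inv g"
proof (induction n)
  case 0
  then show ?case using assms by simp
next
  case (Suc n)
  then show ?case using assms by (simp add: m_assoc[symmetric]) (simp add: m_assoc)
qed

lemma hom_eq_if_conjugate_in:
  assumes "comm_group H" "h \<in> hom G H" "conjugate_in G x y" "x \<in> carrier G"
  shows "h y = h x"
proof -
  interpret H: comm_group H by fact
  interpret h: group_hom G H h
    by (intro group_hom.intro group_hom_axioms.intro is_group H.is_group assms(2))
  obtain g where g: "g \<in> carrier G" "y = g \<otimes> x \<otimes> inv g"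
    using assms(3) by (auto simp: conjugate_in_def)
  then have "h y = h g \<otimes>\<^bsub>H\<^esub> h x \<otimes>\<^bsub>H\<^esub> inv\<^bsub>H\<^esub> h g" using assms(4) by simp
  also have "\<dots> = h x" using g(1) assms(4) by (simp add: H.m_comm[of "h g" "h x"] H.m_assoc)
  finally show ?thesis .
qed

lemma eq_if_square_and_odd_power_eq:
  assumes "x \<in> carrier G" "y \<in> carrier G"
    and "x [^] (2::nat) = y [^] (2::nat)" "x [^] (r::int) = y [^] r" "odd r"
  shows "x = y"
proof -
  obtain k where r: "r = 2 * k + 1" using \<open>odd r\<close> by (rule oddE)
  have key: "z = z [^] r \<otimes> (z [^] (2::nat)) [^] (- k)" if "z \<in> carrier G" for z
  proof -
    have "(z [^] (2::nat)) [^] (- k) = z [^] (2 * - k)"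
      using int_pow_pow[OF that, of 2 "- k"] int_pow_int[of G z 2] by simp
    then show ?thesis using int_pow_mult[OF that, of r "2 * - k"] r that by simp
  qed
  have "x = x [^] r \<otimes> (x [^] (2::nat)) [^] (- k)" by (rule key[OF assms(1)])
  also have "\<dots> = y [^] r \<otimes> (y [^] (2::nat)) [^] (- k)" using assms(3,4) by simp
  also have "\<dots> = y" by (rule key[OF assms(2), symmetric])
  finally show ?thesis .
qed

section \<open>The sign of the regular representation\<close>

lemma bij_betw_mult_left:
  assumes "subgroup H G" "g \<in> H"
  shows "bij_betw (\<lambda>z. g \<otimes> z) H H"
proof (rule bij_betw_byWitness[where f' = "\<lambda>z. inv g \<otimes> z"])
  interpret H: subgroup H G by fact
  show "\<forall>z\<in>H. inv g \<otimes> (g \<otimes> z) = z" "\<forall>z\<in>H. g \<otimes> (inv g \<otimes> z) = z"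
    using assms(2) by (auto simp: m_assoc[symmetric])
  show "(\<lambda>z. g \<otimes> z) ` H \<subseteq> H" "(\<lambda>z. inv g \<otimes> z) ` H \<subseteq> H"
    using assms(2) by auto
qed

lemma bij_betw_conjugation:
  assumes "N \<lhd> G" "a \<in> carrier G"
  shows "bij_betw (\<lambda>z. a \<otimes> z \<otimes> inv a) N N"
proof (rule bij_betw_byWitness[where f' = "\<lambda>z. inv a \<otimes> z \<otimes> a"])
  interpret N: normal N G by fact
  show "\<forall>z\<in>N. inv a \<otimes> (a \<otimes> z \<otimes> inv a) \<otimes> a = z" "\<forall>z\<in>N. a \<otimes> (inv a \<otimes> z \<otimes> a) \<otimes> inv a = z"
    using assms(2) by (auto simp: m_assoc) (simp_all add: m_assoc[symmetric])
  show "(\<lambda>z. a \<otimes> z \<otimes> inv a) ` N \<subseteq> N" "(\<lambda>z. inv a \<otimes> z \<otimes> a) ` N \<subseteq> N"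
    using assms(2) N.inv_op_closed1 N.inv_op_closed2 by auto
qed

lemma sign_on_mult_left_mult:
  assumes "subgroup H G" "finite H" "g \<in> H" "h \<in> H"
  shows "sign_on H (\<lambda>z. (g \<otimes> h) \<otimes> z) = sign_on H (\<lambda>z. g \<otimes> z) * sign_on H (\<lambda>z. h \<otimes> z)"
proof -
  interpret H: subgroup H G by fact
  have "sign_on H (\<lambda>z. (g \<otimes> h) \<otimes> z) = sign_on H ((\<lambda>z. g \<otimes> z) \<circ> (\<lambda>z. h \<otimes> z))"
    using assms(3,4) by (intro sign_on_cong) (auto simp: m_assoc)
  also have "\<dots> = sign_on H (\<lambda>z. g \<otimes> z) * sign_on H (\<lambda>z. h \<otimes> z)"
    using assms by (intro sign_on_compose bij_betw_mult_left)
  finally show ?thesis .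
qed

lemma sign_on_mult_left_conjugate:
  assumes "N \<lhd> G" "finite N" "a \<in> carrier G" "g \<in> N"
  shows "sign_on N (\<lambda>z. (a \<otimes> g \<otimes> inv a) \<otimes> z) = sign_on N (\<lambda>z. g \<otimes> z)"
proof -
  interpret N: normal N G by fact
  define c c' where "c = (\<lambda>z. a \<otimes> z \<otimes> inv a)" and "c' = (\<lambda>z. inv a \<otimes> z \<otimes> a)"
  have bij: "bij_betw c N N" "bij_betw c' N N" "bij_betw (\<lambda>z. g \<otimes> z) N N"
    using bij_betw_conjugation[OF assms(1,3)] bij_betw_conjugation[OF assms(1), of "inv a"]
      bij_betw_mult_left[OF N.subgroup_axioms assms(4)] assms(3)
    by (simp_all add: c_def c'_def)
  have "sign_on N c * sign_on N c' = sign_on N (c \<circ> c')"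
    by (rule sign_on_compose[OF bij(1,2) assms(2), symmetric])
  also have "\<dots> = sign_on N (\<lambda>z. z)"
    using assms(3) by (intro sign_on_cong) (auto simp: c_def c'_def m_assoc, simp add: m_assoc[symmetric])
  finally have cc': "sign_on N c * sign_on N c' = 1" by simp
  have "sign_on N (\<lambda>z. (a \<otimes> g \<otimes> inv a) \<otimes> z) = sign_on N (c \<circ> ((\<lambda>z. g \<otimes> z) \<circ> c'))"
    using assms(3,4) by (intro sign_on_cong) (auto simp: c_def c'_def m_assoc)
  also have "\<dots> = sign_on N c * (sign_on N (\<lambda>z. g \<otimes> z) * sign_on N c')"
    using sign_on_compose[OF bij(1) bij_betw_trans[OF bij(2,3)] assms(2)]
      sign_on_compose[OF bij(3,2) assms(2)] by simp
  also have "\<dots> = sign_on N (\<lambda>z. g \<otimes> z)"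
    using cc' by (simp add: mult.left_commute[of "sign_on N c"])
  finally show ?thesis .
qed

lemma sign_on_mult_left_involution:
  assumes "subgroup H G" "finite H" "z \<in> H" "z \<noteq> \<one>" "z \<otimes> z = \<one>"
  shows "sign_on H (\<lambda>w. z \<otimes> w) = (-1) ^ (card H div 2)"
  unfolding sign_on_def
proof (rule sign_fixpoint_free_involution)
  interpret H: subgroup H G by fact
  show "finite H" by fact
  show "restrict_id (\<lambda>w. z \<otimes> w) H permutes H"
    by (rule permutes_restrict_id[OF bij_betw_mult_left[OF assms(1,3)]])
  fix w assume w: "w \<in> H"
  have "z \<otimes> (z \<otimes> w) = w" using w assms(3,5) by (simp add: m_assoc[symmetric])
  then show "restrict_id (\<lambda>w. z \<otimes> w) H (restrict_id (\<lambda>w. z \<otimes> w) H w) = w"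
    using w assms(3) by simp
  show "restrict_id (\<lambda>w. z \<otimes> w) H w \<noteq> w" using w assms(3,4) by simp
qed

lemma exists_involution:
  assumes "subgroup H G" "finite H" "even (card H)"
  shows "\<exists>z\<in>H. z \<noteq> \<one> \<and> z \<otimes> z = \<one>"
proof -
  interpret H: subgroup H G by fact
  define F where "F = {g \<in> H. inv g = g}"
  have "even (card (H - F))"
    by (rule even_card_if_fixpoint_free_involution[where f = "\<lambda>g. inv g"]) (auto simp: F_def)
  moreover have "card H = card (H - F) + card F"
    using assms(2) by (simp add: F_def card_Diff_subset card_mono)
  ultimately have "even (card F)" using assms(3) by simp
  have "\<one> \<in> F" by (simp add: F_def)
  from \<open>even (card F)\<close> have "F \<noteq> {\<one>}" by auto
  then obtain z where "z \<in> F" "z \<noteq> \<one>" using \<open>\<one> \<in> F\<close> by blast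
  then show ?thesis using r_inv[of z] by (auto simp: F_def)
qed

lemma character_one:
  fixes \<chi> :: "'a \<Rightarrow> int"
  assumes "subgroup N G" "\<And>g h. g \<in> N \<Longrightarrow> h \<in> N \<Longrightarrow> \<chi> (g \<otimes> h) = \<chi> g * \<chi> h"
    and "\<And>g. g \<in> N \<Longrightarrow> \<chi> g = 1 \<or> \<chi> g = -1"
  shows "\<chi> \<one> = 1"
proof -
  have "\<one> \<in> N" using assms(1) by (rule subgroup.one_closed)
  then have "\<chi> \<one> = \<chi> \<one> * \<chi> \<one>" using assms(2)[of \<one> \<one>] by simp
  then show ?thesis using assms(3)[OF \<open>\<one> \<in> N\<close>] by auto
qed

lemma subgroup_character_kernel:
  fixes \<chi> :: "'a \<Rightarrow> int"
  assumes "subgroup N G" "\<And>g h. g \<in> N \<Longrightarrow> h \<in> N \<Longrightarrow> \<chi> (g \<otimes> h) = \<chi> g * \<chi> h"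
    and "\<And>g. g \<in> N \<Longrightarrow> \<chi> g = 1 \<or> \<chi> g = -1"
  shows "subgroup {g \<in> N. \<chi> g = 1} G"
proof -
  interpret N: subgroup N G by fact
  have one: "\<chi> \<one> = 1" by (rule character_one[where \<chi> = \<chi>, OF assms])
  show ?thesis
  proof (rule subgroupI)
    show "{g \<in> N. \<chi> g = 1} \<subseteq> carrier G" by auto
    have "\<one> \<in> {g \<in> N. \<chi> g = 1}" using one by simp
    then show "{g \<in> N. \<chi> g = 1} \<noteq> {}" by blast
    fix g h assume g: "g \<in> {g \<in> N. \<chi> g = 1}" and "h \<in> {g \<in> N. \<chi> g = 1}"
    then show "g \<otimes> h \<in> {g \<in> N. \<chi> g = 1}" using assms(2) by auto
    have "\<chi> (inv g) * \<chi> g = 1" using assms(2)[of "inv g" g] g one by simp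
    then show "inv g \<in> {g \<in> N. \<chi> g = 1}" using g by simp
  qed
qed

lemma card_character_kernel:
  fixes \<chi> :: "'a \<Rightarrow> int"
  assumes "subgroup N G" "finite N" "\<And>g h. g \<in> N \<Longrightarrow> h \<in> N \<Longrightarrow> \<chi> (g \<otimes> h) = \<chi> g * \<chi> h"
    and "\<And>g. g \<in> N \<Longrightarrow> \<chi> g = 1 \<or> \<chi> g = -1" and "z \<in> N" "\<chi> z = -1"
  shows "card N = 2 * card {g \<in> N. \<chi> g = 1}"
proof -
  interpret N: subgroup N G by fact
  define K where "K = {g \<in> N. \<chi> g = 1}"
  have "\<chi> \<one> = 1" by (rule character_one[where \<chi> = \<chi>, OF assms(1,3,4)])
  then have "\<chi> (inv z) = -1" using assms(3)[of "inv z" z] assms(5,6) by simp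
  have "N - K = (\<lambda>g. z \<otimes> g) ` K"
  proof
    show "(\<lambda>g. z \<otimes> g) ` K \<subseteq> N - K"
    proof
      fix h assume "h \<in> (\<lambda>g. z \<otimes> g) ` K"
      then obtain g where g: "g \<in> N" "\<chi> g = 1" "h = z \<otimes> g" by (auto simp: K_def)
      then have "\<chi> h = -1" using assms(3)[OF assms(5) g(1)] assms(6) by simp
      then show "h \<in> N - K" using g(1,3) assms(5) by (simp add: K_def)
    qed
    show "N - K \<subseteq> (\<lambda>g. z \<otimes> g) ` K"
    proof
      fix g assume g: "g \<in> N - K"
      then have "\<chi> g = -1" using assms(4) by (auto simp: K_def)
      then have "inv z \<otimes> g \<in> K" using g assms(3,5) \<open>\<chi> (inv z) = -1\<close> by (auto simp: K_def)
      moreover have "g = z \<otimes> (inv z \<otimes> g)" using g assms(5) by (simp add: m_assoc[symmetric])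
      ultimately show "g \<in> (\<lambda>g. z \<otimes> g) ` K" by blast
    qed
  qed
  moreover have "inj_on (\<lambda>g. z \<otimes> g) K"
    by (rule inj_onI) (use assms(5) in \<open>simp add: K_def\<close>)
  ultimately have "card (N - K) = card K" by (simp add: card_image)
  moreover have "card N = card (N - K) + card K"
    using assms(2) by (simp add: K_def card_Diff_subset card_mono)
  ultimately show ?thesis by (simp add: K_def)
qed

lemma exists_half_order_normal_subgroup_containing_commutators:
  assumes "N \<lhd> G" "finite N" "card N = 2 * m" "odd m"
  obtains K where "K \<lhd> G" "card K = m" "\<And>a n. a \<in> carrier G \<Longrightarrow> n \<in> N \<Longrightarrow> a \<otimes> n \<otimes> inv a \<otimes> inv n \<in> K"
proof -
  interpret N: normal N G by fact
  define \<chi> where "\<chi> g = sign_on N (\<lambda>z. g \<otimes> z)" for g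
  define K where "K = {g \<in> N. \<chi> g = 1}"
  have mult: "\<chi> (g \<otimes> h) = \<chi> g * \<chi> h" if "g \<in> N" "h \<in> N" for g h
    unfolding \<chi>_def by (rule sign_on_mult_left_mult[OF N.subgroup_axioms assms(2) that])
  have plus_minus_one: "\<chi> g = 1 \<or> \<chi> g = -1" for g by (simp add: \<chi>_def sign_on_def sign_def)
  have conj: "\<chi> (a \<otimes> g \<otimes> inv a) = \<chi> g" if "a \<in> carrier G" "g \<in> N" for a g
    unfolding \<chi>_def by (rule sign_on_mult_left_conjugate[OF assms(1,2) that])
  obtain z where z: "z \<in> N" "z \<noteq> \<one>" "z \<otimes> z = \<one>"
    using exists_involution[OF N.subgroup_axioms assms(2)] assms(3) by auto
  have "\<chi> z = (-1) ^ (card N div 2)"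
    unfolding \<chi>_def by (rule sign_on_mult_left_involution[OF N.subgroup_axioms assms(2) z])
  then have "\<chi> z = -1" using assms(3,4) by simp
  show ?thesis
  proof (rule that)
    have "subgroup K G"
      unfolding K_def by (rule subgroup_character_kernel[where \<chi> = \<chi>, OF N.subgroup_axioms mult plus_minus_one])
    then show "K \<lhd> G"
    proof (rule normal_invI)
      fix a g assume "a \<in> carrier G" "g \<in> K"
      then show "a \<otimes> g \<otimes> inv a \<in> K" by (simp add: K_def conj N.inv_op_closed2)
    qed
    show "card K = m"
      using card_character_kernel[OF N.subgroup_axioms assms(2) mult plus_minus_one z(1) \<open>\<chi> z = -1\<close>] assms(3)
      by (simp add: K_def)
    fix a n assume a: "a \<in> carrier G" and n: "n \<in> N"
    have "\<chi> (a \<otimes> n \<otimes> inv a \<otimes> inv n) = \<chi> n * \<chi> (inv n)"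
      using mult[OF N.inv_op_closed2[OF a n] N.m_inv_closed[OF n]] conj[OF a n] by simp
    also have "\<dots> = \<chi> \<one>" using mult[OF n N.m_inv_closed[OF n]] n by simp
    also have "\<dots> = 1" by (rule character_one[where \<chi> = \<chi>, OF N.subgroup_axioms mult plus_minus_one])
    finally show "a \<otimes> n \<otimes> inv a \<otimes> inv n \<in> K" using a n by (simp add: K_def N.inv_op_closed2)
  qed
qed

lemma exists_odd_normal_subgroup_containing_commutators:
  assumes "N \<lhd> G" "finite N" "\<not> 4 dvd card N"
  obtains K where "K \<lhd> G" "odd (card K)" "\<And>a n. a \<in> carrier G \<Longrightarrow> n \<in> N \<Longrightarrow> a \<otimes> n \<otimes> inv a \<otimes> inv n \<in> K"
proof (cases "odd (card N)")
  case True
  interpret N: normal N G by fact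
  show ?thesis
    by (rule that[OF assms(1) True]) (simp add: N.inv_op_closed2)
next
  case False
  then have "card N = 2 * (card N div 2)" "odd (card N div 2)"
    using assms(3) by (auto elim!: evenE)
  then show ?thesis
    using exists_half_order_normal_subgroup_containing_commutators[OF assms(1,2)] that by metis
qed

section \<open>Abelian quotients\<close>

lemma exists_generator_modulo:
  assumes "N \<lhd> G" "cyclic_group (G Mod N)"
  obtains c where "c \<in> carrier G" "\<And>g. g \<in> carrier G \<Longrightarrow> \<exists>n\<in>N. \<exists>i::int. g = n \<otimes> c [^] i"
proof -
  interpret N: normal N G by fact
  obtain C where C: "C \<in> carrier (G Mod N)" "carrier (G Mod N) = range (\<lambda>i::int. C [^]\<^bsub>G Mod N\<^esub> i)"
    using assms(2) group.cyclic_group[OF N.factorgroup_is_group] by blast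
  obtain c where c: "c \<in> carrier G" "C = N #> c" using C(1) by (auto simp: carrier_FactGroup)
  show ?thesis
  proof (rule that[OF c(1)])
    fix g assume g: "g \<in> carrier G"
    then have "N #> g \<in> carrier (G Mod N)" by (auto simp: carrier_FactGroup)
    then obtain i :: int where "N #> g = C [^]\<^bsub>G Mod N\<^esub> i" using C(2) by auto
    also have "\<dots> = N #> c [^] i" using N.FactGroup_int_pow[OF c(1)] c(2) by simp
    finally have "g \<otimes> inv (c [^] i) \<in> N" using r_coset_eq_iff[OF N.subgroup_axioms g] c(1) by simp
    moreover have "g = (g \<otimes> inv (c [^] i)) \<otimes> c [^] i" using g c(1) by (simp add: m_assoc)
    ultimately show "\<exists>n\<in>N. \<exists>i::int. g = n \<otimes> c [^] i" by blast
  qed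
qed

lemma comm_group_if_central_and_cyclic_modulo:
  assumes "Z \<subseteq> carrier G" "c \<in> carrier G"
    and central: "\<And>z g. z \<in> Z \<Longrightarrow> g \<in> carrier G \<Longrightarrow> z \<otimes> g = g \<otimes> z"
    and generated: "\<And>g. g \<in> carrier G \<Longrightarrow> \<exists>z\<in>Z. \<exists>i::int. g = z \<otimes> c [^] i"
  shows "comm_group G"
proof (rule group_comm_groupI)
  have prod: "(z \<otimes> c [^] i) \<otimes> (w \<otimes> c [^] j) = (z \<otimes> w) \<otimes> c [^] (i + j)"
    if "z \<in> Z" "w \<in> Z" for z w and i j :: int
  proof -
    have zw: "z \<in> carrier G" "w \<in> carrier G" using that assms(1) by auto
    then have "(z \<otimes> c [^] i) \<otimes> (w \<otimes> c [^] j) = z \<otimes> (c [^] i \<otimes> w) \<otimes> c [^] j"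
      using assms(2) by (simp add: m_assoc)
    also have "\<dots> = z \<otimes> (w \<otimes> c [^] i) \<otimes> c [^] j" using central[OF that(2)] assms(2) by simp
    also have "\<dots> = (z \<otimes> w) \<otimes> c [^] (i + j)" using zw assms(2) by (simp add: m_assoc int_pow_mult)
    finally show ?thesis .
  qed
  fix x y assume "x \<in> carrier G" "y \<in> carrier G"
  then obtain z w and i j :: int where "z \<in> Z" "w \<in> Z" "x = z \<otimes> c [^] i" "y = w \<otimes> c [^] j"
    using generated by metis
  then show "x \<otimes> y = y \<otimes> x" using prod central assms(1) by (auto simp: add.commute)
qed

lemma comm_group_Mod_if_commutators_in:
  assumes "N \<lhd> G" "cyclic_group (G Mod N)" "K \<lhd> G"
    and "\<And>a n. a \<in> carrier G \<Longrightarrow> n \<in> N \<Longrightarrow> a \<otimes> n \<otimes> inv a \<otimes> inv n \<in> K"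
  shows "comm_group (G Mod K)"
proof -
  interpret N: normal N G by fact
  interpret K: normal K G by fact
  obtain c where c: "c \<in> carrier G" "\<And>g. g \<in> carrier G \<Longrightarrow> \<exists>n\<in>N. \<exists>i::int. g = n \<otimes> c [^] i"
    using exists_generator_modulo[OF assms(1,2)] by blast
  show ?thesis
  proof (rule group.comm_group_if_central_and_cyclic_modulo[OF K.factorgroup_is_group])
    show "(\<lambda>a. K #> a) ` N \<subseteq> carrier (G Mod K)" "K #> c \<in> carrier (G Mod K)"
      using c(1) by (auto simp: carrier_FactGroup)
  next
    fix U V assume "U \<in> (\<lambda>a. K #> a) ` N" "V \<in> carrier (G Mod K)"
    then obtain n a where na: "n \<in> N" "a \<in> carrier G" "U = K #> n" "V = K #> a"
      by (auto simp: carrier_FactGroup)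
    have "(a \<otimes> n) \<otimes> inv (n \<otimes> a) \<in> K"
      using assms(4)[OF na(2,1)] na(1,2) by (simp add: inv_mult_group m_assoc)
    moreover have n: "n \<in> carrier G" using na(1) by simp
    ultimately have "K #> (a \<otimes> n) = K #> (n \<otimes> a)"
      using r_coset_eq_iff[OF K.subgroup_axioms m_closed[OF na(2) n] m_closed[OF n na(2)]] by blast
    then show "U \<otimes>\<^bsub>G Mod K\<^esub> V = V \<otimes>\<^bsub>G Mod K\<^esub> U"
      using na(2-4) n by (simp add: K.rcos_sum)
  next
    fix V assume "V \<in> carrier (G Mod K)"
    then obtain a where a: "a \<in> carrier G" "V = K #> a" by (auto simp: carrier_FactGroup)
    then obtain n i where "n \<in> N" "a = n \<otimes> c [^] (i::int)" using c(2) by blast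
    then have "V = (K #> n) \<otimes>\<^bsub>G Mod K\<^esub> (K #> c) [^]\<^bsub>G Mod K\<^esub> i"
      using a c(1) by (simp add: K.rcos_sum K.FactGroup_int_pow)
    then show "\<exists>U\<in>(\<lambda>a. K #> a) ` N. \<exists>i::int. V = U \<otimes>\<^bsub>G Mod K\<^esub> (K #> c) [^]\<^bsub>G Mod K\<^esub> i"
      using \<open>n \<in> N\<close> by blast
  qed
qed

section \<open>Conjugacy modulo an odd normal subgroup\<close>

lemma exists_conjugator_if_same_odd_part:
  assumes "finite (carrier G)" "K \<lhd> G" "odd (card K)" "u \<in> carrier G"
    and t: "t \<in> centralizer G u" and s: "s \<in> centralizer G u" and ts: "t \<otimes> inv s \<in> K"
    and "t [^] (2 ^ a :: nat) = \<one>" "s [^] (2 ^ a :: nat) = \<one>"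
  shows "\<exists>k\<in>K. s \<otimes> u = k \<otimes> (t \<otimes> u) \<otimes> inv k"
proof -
  interpret K: normal K G by fact
  have carrier: "t \<in> carrier G" "s \<in> carrier G" using t s by (auto simp: centralizer_def)
  define C where "C = K \<inter> centralizer G u"
  have "subgroup C G"
    unfolding C_def by (rule subgroups_Inter_pair[OF K.subgroup_axioms subgroup_centralizer[OF assms(4)]])
  have "\<exists>k\<in>C. t \<otimes> k = k \<otimes> s"
  proof (rule exists_twisted_fixpoint[where a = a])
    show "C \<subseteq> carrier G" using \<open>subgroup C G\<close> by (rule subgroup.subset)
    then show "finite C" using assms(1) by (rule finite_subset)
    show "odd (card C)"
      using card_subgroup_dvd_card[OF K.subgroup_axioms \<open>subgroup C G\<close>] assms(3)
      by (auto simp: C_def elim: dvd_trans)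
    fix k assume k: "k \<in> C"
    then have kK: "k \<in> K" and kc: "k \<in> carrier G" by (auto simp: C_def centralizer_def)
    have "t \<otimes> k \<otimes> inv s = (t \<otimes> k \<otimes> inv t) \<otimes> (t \<otimes> inv s)"
      using carrier kc by (simp add: m_assoc, simp add: m_assoc[symmetric])
    then have "t \<otimes> k \<otimes> inv s \<in> K" using K.inv_op_closed2[OF carrier(1) kK] ts by simp
    moreover have "t \<otimes> k \<otimes> inv s \<in> centralizer G u"
      using subgroup_centralizer[OF assms(4)] t s k
      by (simp add: C_def subgroup.m_closed subgroup.m_inv_closed)
    ultimately show "t \<otimes> k \<otimes> inv s \<in> C" by (simp add: C_def)
  qed (use carrier assms(8,9) in simp_all)
  then obtain k where k: "k \<in> K" "k \<otimes> u = u \<otimes> k" "t \<otimes> k = k \<otimes> s"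
    by (auto simp: C_def centralizer_def)
  have kc: "k \<in> carrier G" using k(1) by simp
  have "s \<otimes> u = inv k \<otimes> (t \<otimes> k) \<otimes> u" using k(3) kc carrier by (simp add: m_assoc[symmetric])
  also have "\<dots> = inv k \<otimes> (t \<otimes> u) \<otimes> inv (inv k)" using k(2) kc carrier assms(4) by (simp add: m_assoc)
  finally show ?thesis using k(1) by blast
qed

lemma exists_conjugator_in_odd_normal_subgroup:
  assumes "finite (carrier G)" "K \<lhd> G" "odd (card K)"
    and x: "x \<in> carrier G" and y: "y \<in> carrier G"
    and "x [^] (2::nat) = y [^] (2::nat)" "K #> x = K #> y"
  shows "\<exists>k\<in>K. y = k \<otimes> x \<otimes> inv k"
proof -
  interpret K: normal K G by fact
  obtain a :: nat and e b :: int where two_part: "\<And>z. z \<in> carrier G \<Longrightarrow> (z [^] e) [^] (2 ^ a :: nat) = \<one>"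
    and odd_part: "\<And>z. z \<in> carrier G \<Longrightarrow> z [^] (1 - e) = (z [^] (2::nat)) [^] b"
    using two_part_exponents[OF assms(1)] by metis
  define t s u where "t = x [^] e" and "s = y [^] e" and "u = x [^] (1 - e)"
  have u_y: "u = y [^] (1 - e)" using odd_part x y assms(6) by (simp add: u_def)
  have split: "z = z [^] e \<otimes> z [^] (1 - e)" if "z \<in> carrier G" for z
    using int_pow_mult[OF that, of e "1 - e"] that by simp
  have "K #> t = K #> s"
    using K.FactGroup_int_pow[OF x, of e] K.FactGroup_int_pow[OF y, of e] assms(7) by (simp add: t_def s_def)
  then have ts: "t \<otimes> inv s \<in> K" using r_coset_eq_iff[OF K.subgroup_axioms] x y by (simp add: t_def s_def)
  have u: "u \<in> carrier G" using x by (simp add: u_def)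
  have t: "t \<in> centralizer G u" unfolding t_def u_def by (rule int_pow_mem_centralizer[OF x])
  have s: "s \<in> centralizer G u" unfolding s_def u_y by (rule int_pow_mem_centralizer[OF y])
  have "\<exists>k\<in>K. s \<otimes> u = k \<otimes> (t \<otimes> u) \<otimes> inv k"
    by (rule exists_conjugator_if_same_odd_part[OF assms(1-3) u t s ts
          two_part[OF x, folded t_def] two_part[OF y, folded s_def]])
  moreover have "x = t \<otimes> u" unfolding t_def u_def by (rule split[OF x])
  moreover have "y = s \<otimes> u" unfolding s_def u_y by (rule split[OF y])
  ultimately show ?thesis by simp
qed

lemma conjugate_if_conjugate_square_and_odd_power:
  assumes "finite (carrier G)" "K \<lhd> G" "odd (card K)" "comm_group (G Mod K)"
    and x: "x \<in> carrier G" and y: "y \<in> carrier G"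
    and square: "conjugate_in G (x [^] (2::nat)) (y [^] (2::nat))"
    and power: "conjugate_in G (x [^] (r::int)) (y [^] r)" and "odd r"
  shows "conjugate_in G x y"
proof -
  interpret K: normal K G by fact
  have hom: "(\<lambda>a. K #> a) \<in> hom G (G Mod K)" by (rule K.r_coset_hom_Mod)
  have "K #> x = K #> y"
  proof (rule group.eq_if_square_and_odd_power_eq[OF K.factorgroup_is_group])
    show "K #> x \<in> carrier (G Mod K)" "K #> y \<in> carrier (G Mod K)"
      using x y by (auto simp: carrier_FactGroup)
    show "(K #> x) [^]\<^bsub>G Mod K\<^esub> (2::nat) = (K #> y) [^]\<^bsub>G Mod K\<^esub> (2::nat)"
      using hom_eq_if_conjugate_in[OF assms(4) hom square] x y
      by (simp add: hom_nat_pow[OF hom] K.factorgroup_is_group)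
    show "(K #> x) [^]\<^bsub>G Mod K\<^esub> r = (K #> y) [^]\<^bsub>G Mod K\<^esub> r"
      using hom_eq_if_conjugate_in[OF assms(4) hom power] x y
      by (simp add: K.FactGroup_int_pow)
  qed fact
  obtain g where g: "g \<in> carrier G" "y [^] (2::nat) = g \<otimes> x [^] (2::nat) \<otimes> inv g"
    using square by (auto simp: conjugate_in_def)
  define x' where "x' = g \<otimes> x \<otimes> inv g"
  have x_x': "conjugate_in G x x'" using g(1) by (auto simp: conjugate_in_def x'_def)
  have "x' \<in> carrier G" using g(1) x by (simp add: x'_def)
  moreover have "x' [^] (2::nat) = y [^] (2::nat)" using g x by (simp add: x'_def conjugate_nat_pow)
  moreover have "K #> x' = K #> y"
    using hom_eq_if_conjugate_in[OF assms(4) hom x_x' x] \<open>K #> x = K #> y\<close> by simp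
  ultimately obtain k where "k \<in> K" "y = k \<otimes> x' \<otimes> inv k"
    using exists_conjugator_in_odd_normal_subgroup[OF assms(1-3) _ y] by blast
  then have "conjugate_in G x' y" by (auto simp: conjugate_in_def)
  then show ?thesis by (rule conjugate_in_trans[OF x_x' _ x])
qed

end

theorem lemma6p4:
  fixes A :: "('a, 'b) monoid_scheme" and G :: "'a set" and x y :: 'a and r :: int
  assumes "group A" and "finite (carrier A)"
    and "normal G A"
    and "cyclic_group (FactGroup A G)"
    and "x \<in> carrier A" and "y \<in> carrier A"
    and "r_coset A G x = r_coset A G y"
    and "conjugate_in A (x [^]\<^bsub>A\<^esub> (2::nat)) (y [^]\<^bsub>A\<^esub> (2::nat))"
    and "odd r" and "r > 1"
    and "conjugate_in A (x [^]\<^bsub>A\<^esub> r) (y [^]\<^bsub>A\<^esub> r)"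
    and "\<not> conjugate_in A x y"
  shows "4 dvd card G"
proof (rule ccontr)
  assume "\<not> 4 dvd card G"
  interpret A: group A by fact
  have "finite G"
    using assms(2) subgroup.subset[OF normal_imp_subgroup[OF assms(3)]] by (rule finite_subset[rotated])
  then obtain K where K: "K \<lhd> A" "odd (card K)"
    and commutators: "\<And>a n. a \<in> carrier A \<Longrightarrow> n \<in> G \<Longrightarrow> a \<otimes>\<^bsub>A\<^esub> n \<otimes>\<^bsub>A\<^esub> inv\<^bsub>A\<^esub> a \<otimes>\<^bsub>A\<^esub> inv\<^bsub>A\<^esub> n \<in> K"
    using A.exists_odd_normal_subgroup_containing_commutators[OF assms(3)] \<open>\<not> 4 dvd card G\<close> by metis
  have "comm_group (A Mod K)"
    by (rule A.comm_group_Mod_if_commutators_in[OF assms(3,4) K(1) commutators])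
  then have "conjugate_in A x y"
    by (rule A.conjugate_if_conjugate_square_and_odd_power[OF assms(2) K _ assms(5,6,8,11,9)])
  with assms(12) show False ..
qed

end
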